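(* Let $T_M>0$, $c>0$, and let $f$ be the solution of $$f''(y)-cf'(y)-f^4(y)=-\int_0^\infty E(y-\eta)f^4(\eta)d\eta\ (y>0),\qquad f(0)=T_M,\qquad f\ge0,$$ obtained by the iterative construction described in the context, and let $\lambda>0$ be such that $\lambda\le f\le T_M$. Then there exist $\varepsilon_0=\varepsilon_0(c,\lambda,T_M)>0$ and, for each $\varepsilon<\varepsilon_0$, a number $L_0=L_0(\varepsilon,\lambda,T_M,c)>0$ such that the following holds. For $a>L_0$ let $\tilde f(y):=f(a+y)$. Then $\tilde f:[-a,\infty)\to\mathbb R_+$ solves $$-\tilde f''(y)+c\tilde f'(y)+\tilde f^4(y)-\int_{-a}^\infty E(\eta-y)\tilde f^4(\eta)d\eta=0,$$ with $\tilde f(-a)=T_M$ and $0<\lambda\le\tilde f\le T_M$; moreover, if $\operatorname{osc}_{[-L,L]}\tilde f<\varepsilon$ for some $L$ with $L_0<L<a$, then $\operatorname{osc}_{[L,\infty)}\tilde f<3\varepsilon$.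
   Context: $E(x)=\frac12\int_{|x|}^\infty\frac{e^{-t}}{t}dt$. Iterative construction: $f_0=0$ and, for $n\ge0$, $f_{n+1}$ is the unique minimizer over $\{f\ge0: f\in W^{1,2}(e^{-cy}dy,\mathbb R_+)\cap L^5(e^{-cy}dy,\mathbb R_+),\ f(0)=T_M\}$ of $\int_0^\infty e^{-cy}\big(\frac{(f')^2}{2}+\frac{f^5}{5}+g_nf\big)dy$, $g_n(y)=-\int_0^\infty E(y-\eta)f_n^4(\eta)d\eta$; the sequence is increasing, bounded by $T_M$, and $f=\lim_nf_n$. For $I\subseteq\mathbb R$, $\operatorname{osc}_I g=\sup_{y_1,y_2\in I}|g(y_1)-g(y_2)|$. *)

theory Defs
  imports "HOL-Analysis.Analysis"
begin

text \<open>The kernel E(x) = 1/2 * int_{|x|}^infty e^{-t}/t dt (for x = 0 the integral diverges;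
  the Lebesgue integral then gives the junk value 0, which only affects a null set).\<close>
definition E :: "real \<Rightarrow> real" where
  "E x = (1/2) * (LINT t:{\<bar>x\<bar>..}|lborel. exp (- t) / t)"

definition osc :: "real set \<Rightarrow> (real \<Rightarrow> real) \<Rightarrow> real" where
  "osc I g = (SUP y1\<in>I. SUP y2\<in>I. \<bar>g y1 - g y2\<bar>)"

definition gterm :: "(real \<Rightarrow> real) \<Rightarrow> real \<Rightarrow> real" where
  "gterm h y = - (LINT \<eta>:{0..}|lborel. E (y - \<eta>) * h \<eta> ^ 4)"

text \<open>Admissible class: h with weak derivative h' (h absolutely continuous on [0,infty)),
  h, h' in L^2(e^{-cy}dy, R_+), h in L^5(e^{-cy}dy, R_+), h \<ge> 0, h(0) = T_M.
  Functions are normalized to be 0 on the negative half-line.\<close>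
definition admissible :: "real \<Rightarrow> real \<Rightarrow> (real \<Rightarrow> real) \<Rightarrow> (real \<Rightarrow> real) \<Rightarrow> bool" where
  "admissible TM c h h' \<longleftrightarrow>
     (\<forall>y<0. h y = 0) \<and>
     continuous_on {0..} h \<and>
     (\<forall>y\<ge>0. 0 \<le> h y) \<and>
     h 0 = TM \<and>
     (\<forall>y\<ge>0. set_integrable lborel {0..y} h' \<and> h y = TM + (LINT t:{0..y}|lborel. h' t)) \<and>
     set_integrable lborel {0..} (\<lambda>y. exp (- c * y) * (h y)\<^sup>2) \<and>
     set_integrable lborel {0..} (\<lambda>y. exp (- c * y) * (h' y)\<^sup>2) \<and>
     set_integrable lborel {0..} (\<lambda>y. exp (- c * y) * \<bar>h y\<bar> ^ 5)"

definition energy :: "real \<Rightarrow> (real \<Rightarrow> real) \<Rightarrow> (real \<Rightarrow> real) \<Rightarrow> (real \<Rightarrow> real) \<Rightarrow> real" where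
  "energy c g h h' =
     (LINT y:{0..}|lborel. exp (- c * y) * ((h' y)\<^sup>2 / 2 + h y ^ 5 / 5 + g y * h y))"

definition is_minimizer :: "real \<Rightarrow> real \<Rightarrow> (real \<Rightarrow> real) \<Rightarrow> (real \<Rightarrow> real) \<Rightarrow> bool" where
  "is_minimizer TM c g h \<longleftrightarrow>
     (\<exists>h'. admissible TM c h h' \<and>
        (\<forall>k k'. admissible TM c k k' \<longrightarrow> energy c g h h' \<le> energy c g k k'))"

primrec fseq :: "real \<Rightarrow> real \<Rightarrow> nat \<Rightarrow> real \<Rightarrow> real" where
  "fseq TM c 0 = (\<lambda>_. 0)"
| "fseq TM c (Suc n) = (THE h. is_minimizer TM c (gterm (fseq TM c n)) h)"

definition flim :: "real \<Rightarrow> real \<Rightarrow> real \<Rightarrow> real" where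
  "flim TM c y = lim (\<lambda>n. fseq TM c n y)"

end

(*
  We show that f converges at infinity, so the oscillation of the shifted profile on [L, oo) is
  small for all large L, whatever its oscillation on [-L, L].

  Put U = f^4 on [0, oo) and E_tail x = int_x^oo E. The flux
    flux z = int U(eta) (1{eta >= z} - E_tail (z - eta)) d eta
  has derivative E*U - U, so integrating the equation between two critical points a, b of f gives
    c (f a - f b) = flux a - flux b.
  As E is even with mass one, the flux kernel has integral zero; it is dominated by E near the
  diagonal and decays exponentially away from it. Hence flux z is small when the E-weighted
  deviation of U from a constant K near z is small. At a local maximum z of f with f z close to
  S = sup f on [T, oo), the equation gives U z <= (E*U) z, which together with U <= S^4 beyond T
  bounds that deviation for K = S^4; local minima near the lower envelope are treated alike. If f
  did not converge, such maxima and minima would occur arbitrarily late with values a fixed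
  distance apart, contradicting the flux balance.
*)
theory Submission
  imports Defs "HOL-Real_Asymp.Real_Asymp"
begin

section \<open>Lebesgue integrals on the real line\<close>

lemma measurable_pair_lborel:
  "measurable (M \<Otimes>\<^sub>M lborel) N = measurable (M \<Otimes>\<^sub>M borel) N"
  "measurable (lborel \<Otimes>\<^sub>M lborel) N = measurable (borel \<Otimes>\<^sub>M (borel :: 'a::euclidean_space measure)) N"
  by (intro measurable_cong_sets sets_pair_measure_cong; simp)+

lemma lborel_integral_shift: "integral\<^sup>L lborel (\<lambda>x. g (x + t)) = integral\<^sup>L lborel (g :: real \<Rightarrow> real)"
  using lborel_integral_real_affine[of 1 g t] by (simp add: add.commute)

lemma lborel_integral_reflect: "integral\<^sup>L lborel (\<lambda>x. g (t - x)) = integral\<^sup>L lborel (g :: real \<Rightarrow> real)"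
  using lborel_integral_real_affine[of "-1" g t] by simp

lemma lborel_integrable_shift_iff:
  "integrable lborel (\<lambda>x. g (x + t)) \<longleftrightarrow> integrable lborel (g :: real \<Rightarrow> real)"
  using lborel_integrable_real_affine_iff[of 1 g t] by (simp add: add.commute)

lemma lborel_integrable_reflect_iff:
  "integrable lborel (\<lambda>x. g (t - x)) \<longleftrightarrow> integrable lborel (g :: real \<Rightarrow> real)"
  using lborel_integrable_real_affine_iff[of "-1" g t] by simp

lemma integrable_indicator_interval_bounded:
  fixes g :: "real \<Rightarrow> real"
  assumes [measurable]: "g \<in> borel_measurable borel" and "\<And>x. \<bar>g x\<bar> \<le> C"
  shows "integrable lborel (\<lambda>x. indicator {a..b} x * g x)"
proof (rule Bochner_Integration.integrable_bound)
  show "integrable lborel (\<lambda>x. C * indicator {a..b} x)"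
    by (cases "a \<le> b") (simp_all add: integrable_indicator_iff)
  show "AE x in lborel. norm (indicator {a..b} x * g x) \<le> norm (C * indicator {a..b} x)"
  proof (rule AE_I2)
    fix x
    have "\<bar>g x\<bar> \<le> \<bar>C\<bar>"
      using assms(2)[of x] by linarith
    then show "norm (indicator {a..b} x * g x) \<le> norm (C * indicator {a..b} x)"
      by (simp add: indicator_def)
  qed
qed simp

lemma nn_integral_exp_minus:
  "(\<integral>\<^sup>+t. ennreal (indicator {r..} t * exp (- t)) \<partial>lborel) = ennreal (exp (- (r::real)))"
proof -
  have "((\<lambda>t. exp (- 1 * t)) has_integral exp (- 1 * r) / 1) {r..}"
    by (rule has_integral_exp_minus_to_infinity) simp
  then show ?thesis
    by (subst nn_integral_has_integral_lebesgue) auto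
qed

lemma exp_minus_set_integrable: "set_integrable lborel {r..} (\<lambda>t::real. exp (- t))"
  and exp_minus_set_integral: "(LINT t:{r..}|lborel. exp (- t)) = exp (- r)"
  using nn_integral_exp_minus[of r]
  by (subst (asm) nn_integral_eq_integrable; auto simp: set_integrable_def set_lebesgue_integral_def)+

lemma set_integrable_exp_minus_div:
  fixes r :: real
  assumes "0 < r"
  shows "set_integrable lborel {r..} (\<lambda>t. exp (- t) / t)"
proof (rule set_integrable_bound[where f="\<lambda>t. exp (- t) / r"])
  show "set_integrable lborel {r..} (\<lambda>t. exp (- t) / r)"
    using set_integrable_divide[OF exp_minus_set_integrable, of r] by simp
  show "set_borel_measurable lborel {r..} (\<lambda>t. exp (- t) / t)"
    unfolding set_borel_measurable_def by measurable
  show "AE x in lborel. x \<in> {r..} \<longrightarrow> norm (exp (- x) / x) \<le> norm (exp (- x) / r)"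
    using assms by (auto intro!: AE_I2 divide_left_mono)
qed

section \<open>The kernel E and its tail\<close>

lemma E_measurable [measurable]: "E \<in> borel_measurable borel"
proof -
  have "(\<lambda>(x, t). indicator {\<bar>x\<bar>..} t * (exp (- t) / t)) \<in> borel_measurable (borel \<Otimes>\<^sub>M (lborel::real measure))"
    unfolding measurable_pair_lborel indicator_def split_beta' atLeast_iff by measurable
  from lborel.borel_measurable_lebesgue_integral[OF this] show ?thesis
    unfolding E_def[abs_def] set_lebesgue_integral_def by simp
qed

lemma E_nonneg: "0 \<le> E x"
  unfolding E_def set_lebesgue_integral_def
  by (auto intro!: integral_nonneg_AE simp: indicator_def)

lemma E_minus [simp]: "E (- x) = E x"
  unfolding E_def by simp

lemma E_diff_commute: "E (x - y) = E (y - x)"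
  using E_minus[of "y - x"] by simp

lemma nn_integral_indicator_abs_atLeast:
  "(\<integral>\<^sup>+x. ennreal (indicator {\<bar>x\<bar>..} t * (exp (- t) / t)) \<partial>lborel)
     = ennreal (2 * (indicator {0<..} t * exp (- t)))"
proof (cases "t > 0")
  case True
  then have "(\<lambda>x. ennreal (indicator {\<bar>x\<bar>..} t * (exp (- t) / t)))
      = (\<lambda>x. ennreal (exp (- t) / t) * indicator {-t..t} x)"
    by (auto simp: abs_le_iff fun_eq_iff split: split_indicator)
  with True show ?thesis
    by (simp add: nn_integral_cmult_indicator ennreal_mult[symmetric])
next
  case False
  then have "(\<lambda>x. ennreal (indicator {\<bar>x\<bar>..} t * (exp (- t) / t))) = (\<lambda>x. 0)"
    by (intro ext, cases "t = 0") (auto simp: indicator_def)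
  with False show ?thesis
    by simp
qed

lemma nn_integral_E: "(\<integral>\<^sup>+x. ennreal (E x) \<partial>lborel) = 1"
proof -
  define G where "G x t = ennreal (indicator {\<bar>x\<bar>..} t * (exp (- t) / t))" for x t :: real
  have G_measurable: "case_prod G \<in> borel_measurable (lborel \<Otimes>\<^sub>M lborel)"
    unfolding measurable_pair_lborel G_def indicator_def split_beta' atLeast_iff by measurable
  have E_eq: "ennreal (E x) = ennreal (1/2) * (\<integral>\<^sup>+t. G x t \<partial>lborel)" if "x \<noteq> 0" for x
  proof -
    have "integrable lborel (\<lambda>t. indicator {\<bar>x\<bar>..} t * (exp (- t) / t))"
      using set_integrable_exp_minus_div[of "\<bar>x\<bar>"] that unfolding set_integrable_def by simp
    then have "(\<integral>\<^sup>+t. G x t \<partial>lborel) = ennreal (2 * E x)"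
      unfolding G_def E_def set_lebesgue_integral_def
      by (subst nn_integral_eq_integral) (auto simp: indicator_def)
    moreover have "ennreal (1/2) * ennreal (2 * E x) = ennreal (E x)"
      using E_nonneg[of x] by (subst ennreal_mult[symmetric]) auto
    ultimately show ?thesis
      by simp
  qed
  have "(\<integral>\<^sup>+x. ennreal (E x) \<partial>lborel) = (\<integral>\<^sup>+x. ennreal (1/2) * (\<integral>\<^sup>+t. G x t \<partial>lborel) \<partial>lborel)"
    using AE_lborel_singleton[of 0]
    by (intro nn_integral_cong_AE) (auto elim!: eventually_mono simp: E_eq)
  also have "\<dots> = ennreal (1/2) * (\<integral>\<^sup>+x. \<integral>\<^sup>+t. G x t \<partial>lborel \<partial>lborel)"
    using lborel.borel_measurable_nn_integral[OF G_measurable] by (intro nn_integral_cmult) simp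
  also have "(\<integral>\<^sup>+x. \<integral>\<^sup>+t. G x t \<partial>lborel \<partial>lborel) = (\<integral>\<^sup>+t. \<integral>\<^sup>+x. G x t \<partial>lborel \<partial>lborel)"
    using lborel_pair.Fubini'[OF G_measurable] by simp
  also have "(\<integral>\<^sup>+t. \<integral>\<^sup>+x. G x t \<partial>lborel \<partial>lborel)
      = (\<integral>\<^sup>+t. 2 * ennreal (indicator {0..} t * exp (- t)) \<partial>lborel)"
    unfolding G_def nn_integral_indicator_abs_atLeast using AE_lborel_singleton[of 0]
    by (intro nn_integral_cong_AE) (auto elim!: eventually_mono simp: indicator_def ennreal_mult)
  also have "\<dots> = 2"
    by (simp add: nn_integral_cmult nn_integral_exp_minus[of 0])
  also have "ennreal (1/2) * 2 = 1"
    using ennreal_mult[of "1/2" 2] by simp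
  finally show ?thesis .
qed

lemma E_integrable: "integrable lborel E"
  by (rule integrableI_nonneg) (auto simp: E_nonneg nn_integral_E)

lemma integral_E: "integral\<^sup>L lborel E = 1"
  using nn_integral_eq_integral[OF E_integrable] nn_integral_E E_nonneg by simp

lemma E_le_exp:
  assumes "1 \<le> \<bar>x\<bar>"
  shows "E x \<le> exp (- \<bar>x\<bar>) / 2"
proof -
  have "(LINT t:{\<bar>x\<bar>..}|lborel. exp (- t) / t) \<le> (LINT t:{\<bar>x\<bar>..}|lborel. exp (- t))"
  proof (rule set_integral_mono)
    show "set_integrable lborel {\<bar>x\<bar>..} (\<lambda>t. exp (- t) / t)"
      using assms by (intro set_integrable_exp_minus_div) auto
    fix t assume "t \<in> {\<bar>x\<bar>..}"
    with assms show "exp (- t) / t \<le> exp (- t)"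
      by (simp add: divide_le_eq)
  qed (rule exp_minus_set_integrable)
  then show ?thesis
    unfolding E_def exp_minus_set_integral by simp
qed

lemma half_le_scaled_E:
  assumes "0 < \<bar>x\<bar>" "\<bar>x\<bar> \<le> R"
  shows "1/2 \<le> (R + 1) * exp (R + 1) * E x"
proof -
  let ?C = "exp (- (R + 1)) / (R + 1)"
  have window: "(\<lambda>t. indicator {\<bar>x\<bar>..} t *\<^sub>R (indicator {R..R+1} t * ?C)) = (\<lambda>t. indicator {R..R+1} t *\<^sub>R ?C)"
    using assms by (auto simp: indicator_def fun_eq_iff)
  have "?C = (LINT t:{\<bar>x\<bar>..}|lborel. indicator {R..R+1} t * ?C)"
    unfolding set_lebesgue_integral_def window using assms by simp
  also have "\<dots> \<le> (LINT t:{\<bar>x\<bar>..}|lborel. exp (- t) / t)"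
  proof (rule set_integral_mono)
    show "set_integrable lborel {\<bar>x\<bar>..} (\<lambda>t. exp (- t) / t)"
      using assms by (intro set_integrable_exp_minus_div) auto
    show "set_integrable lborel {\<bar>x\<bar>..} (\<lambda>t. indicator {R..R+1} t * ?C)"
      unfolding set_integrable_def window by (rule integrable_indicator) auto
    fix t assume "t \<in> {\<bar>x\<bar>..}"
    with assms show "indicator {R..R+1} t * ?C \<le> exp (- t) / t"
      by (auto intro!: frac_le simp: indicator_def)
  qed
  finally have "?C / 2 \<le> (LINT t:{\<bar>x\<bar>..}|lborel. exp (- t) / t) / 2"
    by (rule divide_right_mono) simp
  then have "?C / 2 \<le> E x"
    by (simp add: E_def)
  have "1/2 = (R + 1) * (exp (R + 1) * exp (- (R + 1))) / (2 * (R + 1))"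
    using assms by (simp only: exp_minus_inverse mult_1_right) simp
  also have "\<dots> = (R + 1) * exp (R + 1) * (?C / 2)"
    by (simp add: ac_simps)
  also have "\<dots> \<le> (R + 1) * exp (R + 1) * E x"
    using \<open>?C / 2 \<le> E x\<close> assms by (intro mult_left_mono) auto
  finally show ?thesis .
qed

lemma integrable_indicator_E:
  "A \<in> sets borel \<Longrightarrow> integrable lborel (\<lambda>s. indicator A s * E s)"
  using integrable_real_mult_indicator[OF _ E_integrable, of A] by (simp add: mult.commute)

lemma integrable_E_reflect: "integrable lborel (\<lambda>\<eta>. E (z - \<eta>))"
  using lborel_integrable_reflect_iff[of E z] E_integrable by simp

lemma integral_E_reflect: "integral\<^sup>L lborel (\<lambda>\<eta>. E (z - \<eta>)) = 1"
  using lborel_integral_reflect[of E z] integral_E by simp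

lemma integrable_indicator_E_reflect:
  "A \<in> sets borel \<Longrightarrow> integrable lborel (\<lambda>\<eta>. indicator A \<eta> * E (z - \<eta>))"
  using integrable_real_mult_indicator[OF _ integrable_E_reflect, of A] by (simp add: mult.commute)

lemma integrable_indicator_E_shift:
  "A \<in> sets borel \<Longrightarrow> integrable lborel (\<lambda>y. indicator A y * E (y - \<eta>))"
  using integrable_indicator_E_reflect[of A \<eta>] by (simp add: E_diff_commute[of \<eta>])

lemma set_integral_E_shift_atLeast:
  "(LINT \<eta>:{-a..}|lborel. E (\<eta> - y) * h (a + \<eta>)) = (LINT \<eta>:{0..}|lborel. E (a + y - \<eta>) * h \<eta>)"
proof -
  let ?g = "\<lambda>\<eta>. indicator {-a..} \<eta> * (E (\<eta> - y) * h (a + \<eta>))"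
  have "(LINT \<eta>:{-a..}|lborel. E (\<eta> - y) * h (a + \<eta>)) = integral\<^sup>L lborel (\<lambda>x. ?g (x - a))"
    using lborel_integral_shift[of ?g "- a"] by (simp add: set_lebesgue_integral_def)
  also have "\<dots> = (LINT \<eta>:{0..}|lborel. E (a + y - \<eta>) * h \<eta>)"
    unfolding set_lebesgue_integral_def
    by (rule Bochner_Integration.integral_cong) (auto simp: indicator_def E_diff_commute algebra_simps)
  finally show ?thesis .
qed

definition E_tail :: "real \<Rightarrow> real" where
  "E_tail x = integral\<^sup>L lborel (\<lambda>s. indicator {x..} s * E s)"

lemma E_tail_nonneg: "0 \<le> E_tail x"
  unfolding E_tail_def by (auto intro!: integral_nonneg_AE simp: E_nonneg)

lemma E_tail_measurable [measurable]: "E_tail \<in> borel_measurable borel"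
proof -
  have "(\<lambda>(x, s). indicator {x..} s * E s) \<in> borel_measurable (borel \<Otimes>\<^sub>M (lborel::real measure))"
    unfolding measurable_pair_lborel indicator_def split_beta' atLeast_iff by measurable
  from lborel.borel_measurable_lebesgue_integral[OF this] show ?thesis
    unfolding E_tail_def[abs_def] by simp
qed

lemma E_tail_greaterThan: "integral\<^sup>L lborel (\<lambda>s. indicator {x<..} s * E s) = E_tail x"
  unfolding E_tail_def using AE_lborel_singleton[of x]
  by (intro integral_cong_AE) (auto elim!: eventually_mono simp: indicator_def)

lemma integral_E_shift_atLeast: "integral\<^sup>L lborel (\<lambda>y. indicator {z..} y * E (y - \<eta>)) = E_tail (z - \<eta>)"
  using lborel_integral_shift[of "\<lambda>y. indicator {z..} y * E (y - \<eta>)" \<eta>]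
  by (simp add: E_tail_def indicator_def diff_le_eq)

lemma integral_E_shift_greaterThan:
  "integral\<^sup>L lborel (\<lambda>y. indicator {z<..} y * E (y - \<eta>)) = E_tail (z - \<eta>)"
  using lborel_integral_shift[of "\<lambda>y. indicator {z<..} y * E (y - \<eta>)" \<eta>]
    E_tail_greaterThan[of "z - \<eta>"]
  by (simp add: indicator_def diff_less_eq)

lemma integral_E_reflect_lessThan:
  "integral\<^sup>L lborel (\<lambda>\<eta>. indicator {..<T} \<eta> * E (z - \<eta>)) = E_tail (z - T)"
  using lborel_integral_reflect[of "\<lambda>s. indicator {z - T<..} s * E s" z] E_tail_greaterThan[of "z - T"]
  by (simp add: indicator_def)

lemma integral_E_reflect_atLeast:
  "integral\<^sup>L lborel (\<lambda>\<eta>. indicator {T..} \<eta> * E (z - \<eta>)) = 1 - E_tail (z - T)"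
proof -
  have "integral\<^sup>L lborel (\<lambda>\<eta>. indicator {T..} \<eta> * E (z - \<eta>))
      = integral\<^sup>L lborel (\<lambda>\<eta>. E (z - \<eta>) - indicator {..<T} \<eta> * E (z - \<eta>))"
    by (rule Bochner_Integration.integral_cong) (auto simp: indicator_def)
  then show ?thesis
    by (simp add: Bochner_Integration.integral_diff integrable_E_reflect integrable_indicator_E_reflect
        integral_E_reflect integral_E_reflect_lessThan)
qed

lemma integral_E_shift_interval:
  assumes "a \<le> b"
  shows "integral\<^sup>L lborel (\<lambda>y. indicator {a..b} y * E (y - \<eta>)) = E_tail (a - \<eta>) - E_tail (b - \<eta>)"
proof -
  have "integral\<^sup>L lborel (\<lambda>y. indicator {a..b} y * E (y - \<eta>))
      = integral\<^sup>L lborel (\<lambda>y. indicator {a..} y * E (y - \<eta>) - indicator {b<..} y * E (y - \<eta>))"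
    using assms by (intro Bochner_Integration.integral_cong) (auto simp: indicator_def)
  also have "\<dots> = E_tail (a - \<eta>) - E_tail (b - \<eta>)"
    by (subst Bochner_Integration.integral_diff)
       (auto intro: integrable_indicator_E_shift simp: integral_E_shift_atLeast integral_E_shift_greaterThan)
  finally show ?thesis .
qed

lemma E_tail_add_minus: "E_tail x + E_tail (- x) = 1"
proof -
  have "E_tail x = integral\<^sup>L lborel (\<lambda>s. indicator {..<-x} s * E (0 - s))"
    using integral_E_reflect_lessThan[of "- x" 0] by simp
  then have "E_tail x + E_tail (- x)
      = integral\<^sup>L lborel (\<lambda>s. indicator {..<-x} s * E s + indicator {-x..} s * E s)"
    by (subst Bochner_Integration.integral_add) (auto intro: integrable_indicator_E simp: E_tail_def)
  also have "\<dots> = integral\<^sup>L lborel E"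
    by (rule Bochner_Integration.integral_cong) (auto simp: indicator_def)
  finally show ?thesis
    by (simp add: integral_E)
qed

lemma E_tail_antimono: "x \<le> y \<Longrightarrow> E_tail y \<le> E_tail x"
  unfolding E_tail_def
  by (intro integral_mono integrable_indicator_E) (auto simp: E_nonneg indicator_def)

lemma E_tail_le_half: "0 \<le> x \<Longrightarrow> E_tail x \<le> 1/2"
  using E_tail_add_minus[of 0] E_tail_antimono[of 0 x] by simp

lemma E_tail_le_exp:
  assumes "0 \<le> x"
  shows "E_tail x \<le> exp (1 - x) / 2"
proof (cases "1 \<le> x")
  case True
  have "E_tail x \<le> integral\<^sup>L lborel (\<lambda>s. indicator {x..} s * (exp (- s) / 2))"
    unfolding E_tail_def
  proof (rule integral_mono)
    show "integrable lborel (\<lambda>s. indicator {x..} s * E s)"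
      by (rule integrable_indicator_E) simp
    show "integrable lborel (\<lambda>s. indicator {x..} s * (exp (- s) / 2))"
      using exp_minus_set_integrable[of x] unfolding set_integrable_def by simp
    fix s show "indicator {x..} s * E s \<le> indicator {x..} s * (exp (- s) / 2)"
      using E_le_exp[of s] True by (auto simp: indicator_def)
  qed
  also have "\<dots> = exp (- x) / 2"
    using exp_minus_set_integral[of x] unfolding set_lebesgue_integral_def by simp
  also have "\<dots> \<le> exp (1 - x) / 2"
    by simp
  finally show ?thesis .
next
  case False
  then have "1 \<le> exp (1 - x)"
    by simp
  then show ?thesis
    using E_tail_le_half[OF assms] by linarith
qed

lemma
  assumes "0 \<le> R"
  shows integrable_E_tail_greaterThan: "integrable lborel (\<lambda>x. indicator {R<..} x * E_tail x)"
    and integral_E_tail_greaterThan_le: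
      "integral\<^sup>L lborel (\<lambda>x. indicator {R<..} x * E_tail x) \<le> exp (1 - R) / 2"
proof -
  have bound: "indicator {R<..} x * E_tail x \<le> exp 1 / 2 * (indicator {R..} x * exp (- x))" for x
  proof (cases "R < x")
    case True
    then have "E_tail x \<le> exp (1 - x) / 2"
      using assms by (intro E_tail_le_exp) simp
    also have "exp (1 - x) = exp 1 * exp (- x)"
      by (simp add: exp_diff exp_minus field_simps)
    finally show ?thesis
      using True by (simp add: indicator_def)
  qed (simp add: indicator_def)
  have exp_int: "integrable lborel (\<lambda>x. exp 1 / 2 * (indicator {R..} x * exp (- x)))"
    using exp_minus_set_integrable[of R] unfolding set_integrable_def by simp
  show int: "integrable lborel (\<lambda>x. indicator {R<..} x * E_tail x)"
    by (rule Bochner_Integration.integrable_bound[OF exp_int])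
       (use bound in \<open>auto intro!: AE_I2 simp: E_tail_nonneg\<close>)
  have "integral\<^sup>L lborel (\<lambda>x. indicator {R<..} x * E_tail x)
      \<le> integral\<^sup>L lborel (\<lambda>x. exp 1 / 2 * (indicator {R..} x * exp (- x)))"
    by (rule integral_mono[OF int exp_int bound])
  also have "\<dots> = exp 1 / 2 * exp (- R)"
    using exp_minus_set_integral[of R] by (simp add: set_lebesgue_integral_def)
  also have "\<dots> = exp (1 - R) / 2"
    by (simp add: exp_diff exp_minus field_simps)
  finally show "integral\<^sup>L lborel (\<lambda>x. indicator {R<..} x * E_tail x) \<le> exp (1 - R) / 2" .
qed

lemma integral_E_tail_right:
  "integral\<^sup>L lborel (\<lambda>\<eta>. indicator {z + R<..} \<eta> * E_tail (\<eta> - z))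
     = integral\<^sup>L lborel (\<lambda>x. indicator {R<..} x * E_tail x)"
  using lborel_integral_shift[of "\<lambda>x. indicator {R<..} x * E_tail x" "- z"]
  by (simp add: indicator_def less_diff_eq add.commute)

lemma integral_E_tail_left:
  "integral\<^sup>L lborel (\<lambda>\<eta>. indicator {..<z - R} \<eta> * E_tail (z - \<eta>))
     = integral\<^sup>L lborel (\<lambda>x. indicator {R<..} x * E_tail x)"
  using lborel_integral_reflect[of "\<lambda>x. indicator {R<..} x * E_tail x" z]
  by (simp add: indicator_def less_diff_eq add.commute)

lemma integrable_E_tail_right:
  "0 \<le> R \<Longrightarrow> integrable lborel (\<lambda>\<eta>. indicator {z + R<..} \<eta> * E_tail (\<eta> - z))"
  using lborel_integrable_shift_iff[of "\<lambda>x. indicator {R<..} x * E_tail x" "- z"]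
    integrable_E_tail_greaterThan[of R]
  by (simp add: indicator_def less_diff_eq add.commute)

lemma integrable_E_tail_left:
  "0 \<le> R \<Longrightarrow> integrable lborel (\<lambda>\<eta>. indicator {..<z - R} \<eta> * E_tail (z - \<eta>))"
  using lborel_integrable_reflect_iff[of "\<lambda>x. indicator {R<..} x * E_tail x" z]
    integrable_E_tail_greaterThan[of R]
  by (simp add: indicator_def less_diff_eq add.commute)

section \<open>The flux of a bounded source\<close>

text \<open>The z-derivative of flux_kernel z \<eta> is E (z - \<eta>) minus a Dirac mass at \<eta>, so the
  flux of U defined below has derivative E*U - U.\<close>
definition flux_kernel :: "real \<Rightarrow> real \<Rightarrow> real" where
  "flux_kernel z \<eta> = indicator {z..} \<eta> - E_tail (z - \<eta>)"

lemma flux_kernel_measurable [measurable]: "flux_kernel z \<in> borel_measurable borel"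
  unfolding flux_kernel_def[abs_def] by measurable

lemma flux_kernel_off_diagonal:
  assumes "\<eta> \<noteq> z"
  shows "flux_kernel z \<eta> = indicator {z<..} \<eta> * E_tail (\<eta> - z) - indicator {..<z} \<eta> * E_tail (z - \<eta>)"
  using assms E_tail_add_minus[of "\<eta> - z"] by (auto simp: flux_kernel_def indicator_def)

lemma abs_flux_kernel: "\<bar>flux_kernel z \<eta>\<bar> = E_tail \<bar>\<eta> - z\<bar>"
proof (cases "z \<le> \<eta>")
  case True
  then have "flux_kernel z \<eta> = E_tail (\<eta> - z)"
    using E_tail_add_minus[of "\<eta> - z"] by (simp add: flux_kernel_def)
  then show ?thesis
    using True E_tail_nonneg[of "\<eta> - z"] by simp
next
  case False
  then show ?thesis
    using E_tail_nonneg[of "z - \<eta>"] by (simp add: flux_kernel_def)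
qed

lemma integrable_flux_kernel: "integrable lborel (flux_kernel z)"
  and integral_flux_kernel: "integral\<^sup>L lborel (flux_kernel z) = 0"
proof -
  have ae: "AE \<eta> in lborel. flux_kernel z \<eta>
      = indicator {z + 0<..} \<eta> * E_tail (\<eta> - z) - indicator {..<z - 0} \<eta> * E_tail (z - \<eta>)"
    using AE_lborel_singleton[of z] by eventually_elim (simp add: flux_kernel_off_diagonal)
  have right: "integrable lborel (\<lambda>\<eta>. indicator {z + 0<..} \<eta> * E_tail (\<eta> - z))"
    and left: "integrable lborel (\<lambda>\<eta>. indicator {..<z - 0} \<eta> * E_tail (z - \<eta>))"
    by (simp_all only: integrable_E_tail_right integrable_E_tail_left order_refl)
  show "integrable lborel (flux_kernel z)"
    using integrable_cong_AE[OF _ _ ae] right left by simp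
  show "integral\<^sup>L lborel (flux_kernel z) = 0"
    using integral_cong_AE[OF _ _ ae] right left integral_E_tail_right[of z 0] integral_E_tail_left[of z 0]
    by (simp add: Bochner_Integration.integral_diff)
qed

lemma abs_mult_flux_kernel_le:
  assumes "\<bar>u\<bar> \<le> B" "0 < R" "\<eta> \<noteq> z"
  shows "\<bar>u * flux_kernel z \<eta>\<bar>
    \<le> (R + 1) * exp (R + 1) * (indicator {z - R..z + R} \<eta> * (\<bar>u\<bar> * E (z - \<eta>)))
      + B * (indicator {z + R<..} \<eta> * E_tail (\<eta> - z) + indicator {..<z - R} \<eta> * E_tail (z - \<eta>))"
    (is "_ \<le> ?near + ?far")
proof -
  have near_nonneg: "0 \<le> ?near"
    using assms(2) E_nonneg[of "z - \<eta>"] by simp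
  have far_nonneg: "0 \<le> ?far"
    using assms(1) E_tail_nonneg[of "\<eta> - z"] E_tail_nonneg[of "z - \<eta>"] by simp
  have lhs: "\<bar>u * flux_kernel z \<eta>\<bar> = \<bar>u\<bar> * E_tail \<bar>\<eta> - z\<bar>"
    by (simp add: abs_mult abs_flux_kernel)
  consider "\<bar>\<eta> - z\<bar> \<le> R" | "z + R < \<eta>" | "\<eta> < z - R"
    by linarith
  then show ?thesis
  proof cases
    case 1
    have "1/2 \<le> (R + 1) * exp (R + 1) * E (z - \<eta>)"
      using half_le_scaled_E[of "z - \<eta>" R] 1 assms(3) by (simp add: abs_minus_commute)
    then have "\<bar>u\<bar> * E_tail \<bar>\<eta> - z\<bar> \<le> \<bar>u\<bar> * ((R + 1) * exp (R + 1) * E (z - \<eta>))"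
      using E_tail_le_half[of "\<bar>\<eta> - z\<bar>"] by (intro mult_left_mono) auto
    then show ?thesis
      using 1 lhs far_nonneg by (simp add: indicator_def abs_le_iff algebra_simps)
  next
    case 2
    then have "\<bar>u\<bar> * E_tail \<bar>\<eta> - z\<bar> \<le> ?far"
      using assms by (auto intro!: mult_mono simp: indicator_def E_tail_nonneg)
    then show ?thesis
      using lhs near_nonneg by linarith
  next
    case 3
    then have "\<bar>u\<bar> * E_tail \<bar>\<eta> - z\<bar> \<le> ?far"
      using assms by (auto intro!: mult_mono simp: indicator_def E_tail_nonneg abs_minus_commute)
    then show ?thesis
      using lhs near_nonneg by linarith
  qed
qed

locale bounded_source =
  fixes U :: "real \<Rightarrow> real" and B :: real
  assumes U_measurable [measurable]: "U \<in> borel_measurable borel"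
    and U_nonneg: "\<And>x. 0 \<le> U x" and U_le: "\<And>x. U x \<le> B"
begin

lemma B_nonneg: "0 \<le> B"
  using U_nonneg[of 0] U_le[of 0] by simp

lemma E_mult_U_le: "E x * U \<eta> \<le> B * E x"
  using mult_right_mono[OF U_le E_nonneg] by (simp add: mult.commute)

definition conv :: "real \<Rightarrow> real" where
  "conv y = integral\<^sup>L lborel (\<lambda>\<eta>. E (y - \<eta>) * U \<eta>)"

lemma integrable_conv_integrand: "integrable lborel (\<lambda>\<eta>. E (y - \<eta>) * U \<eta>)"
proof (rule Bochner_Integration.integrable_bound)
  show "integrable lborel (\<lambda>\<eta>. B * E (y - \<eta>))"
    using integrable_E_reflect by simp
  show "AE \<eta> in lborel. norm (E (y - \<eta>) * U \<eta>) \<le> norm (B * E (y - \<eta>))"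
    using U_nonneg E_nonneg E_mult_U_le B_nonneg by (auto intro!: AE_I2 simp: abs_mult)
qed simp

lemma integrable_indicator_conv_integrand:
  "A \<in> sets borel \<Longrightarrow> integrable lborel (\<lambda>\<eta>. indicator A \<eta> * (E (z - \<eta>) * U \<eta>))"
  using integrable_real_mult_indicator[OF _ integrable_conv_integrand, of A] by (simp add: mult.commute)

lemma conv_measurable [measurable]: "conv \<in> borel_measurable borel"
proof -
  have "(\<lambda>(y, \<eta>). E (y - \<eta>) * U \<eta>) \<in> borel_measurable (borel \<Otimes>\<^sub>M (lborel::real measure))"
    unfolding measurable_pair_lborel split_beta' by measurable
  from lborel.borel_measurable_lebesgue_integral[OF this] show ?thesis
    unfolding conv_def[abs_def] by simp
qed

lemma conv_nonneg: "0 \<le> conv y"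
  unfolding conv_def by (auto intro!: integral_nonneg_AE simp: E_nonneg U_nonneg)

lemma conv_le: "conv y \<le> B"
proof -
  have "conv y \<le> integral\<^sup>L lborel (\<lambda>\<eta>. B * E (y - \<eta>))"
    unfolding conv_def using integrable_E_reflect
    by (intro integral_mono integrable_conv_integrand) (auto simp: E_mult_U_le)
  then show ?thesis
    by (simp add: integral_E_reflect)
qed

lemma integral_atLeast_conv_integrand_bounds:
  "conv z - B * E_tail (z - T) \<le> integral\<^sup>L lborel (\<lambda>\<eta>. indicator {T..} \<eta> * (E (z - \<eta>) * U \<eta>))"
  "integral\<^sup>L lborel (\<lambda>\<eta>. indicator {T..} \<eta> * (E (z - \<eta>) * U \<eta>)) \<le> conv z"
proof -
  let ?below = "integral\<^sup>L lborel (\<lambda>\<eta>. indicator {..<T} \<eta> * (E (z - \<eta>) * U \<eta>))"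
  have split: "integral\<^sup>L lborel (\<lambda>\<eta>. indicator {T..} \<eta> * (E (z - \<eta>) * U \<eta>)) = conv z - ?below"
  proof -
    have "integral\<^sup>L lborel (\<lambda>\<eta>. indicator {T..} \<eta> * (E (z - \<eta>) * U \<eta>))
        = integral\<^sup>L lborel (\<lambda>\<eta>. E (z - \<eta>) * U \<eta> - indicator {..<T} \<eta> * (E (z - \<eta>) * U \<eta>))"
      by (rule Bochner_Integration.integral_cong) (auto simp: indicator_def)
    also have "\<dots> = conv z - ?below"
      unfolding conv_def
      by (rule Bochner_Integration.integral_diff[OF integrable_conv_integrand integrable_indicator_conv_integrand]) simp
    finally show ?thesis .
  qed
  have "0 \<le> ?below"
    by (auto intro!: integral_nonneg_AE simp: E_nonneg U_nonneg)
  moreover have "?below \<le> integral\<^sup>L lborel (\<lambda>\<eta>. B * (indicator {..<T} \<eta> * E (z - \<eta>)))"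
    using integrable_indicator_E_reflect[of "{..<T}" z]
    by (intro integral_mono integrable_indicator_conv_integrand)
       (auto simp: indicator_def E_mult_U_le)
  ultimately show "conv z - B * E_tail (z - T) \<le> integral\<^sup>L lborel (\<lambda>\<eta>. indicator {T..} \<eta> * (E (z - \<eta>) * U \<eta>))"
    and "integral\<^sup>L lborel (\<lambda>\<eta>. indicator {T..} \<eta> * (E (z - \<eta>) * U \<eta>)) \<le> conv z"
    unfolding split by (simp_all add: integral_E_reflect_lessThan)
qed

lemma
  assumes "a \<le> b"
  shows integral_interval_conv: "integral\<^sup>L lborel (\<lambda>y. indicator {a..b} y * conv y)
           = integral\<^sup>L lborel (\<lambda>\<eta>. U \<eta> * (E_tail (a - \<eta>) - E_tail (b - \<eta>)))"
    and integrable_U_mult_E_tail_diff: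
      "integrable lborel (\<lambda>\<eta>. U \<eta> * (E_tail (a - \<eta>) - E_tail (b - \<eta>)))"
proof -
  define H where "H y \<eta> = ennreal (indicator {a..b} y * (E (y - \<eta>) * U \<eta>))" for y \<eta>
  have H_measurable: "case_prod H \<in> borel_measurable (lborel \<Otimes>\<^sub>M lborel)"
    unfolding measurable_pair_lborel H_def indicator_def split_beta' atLeastAtMost_iff by measurable
  have conv_int: "integrable lborel (\<lambda>y. indicator {a..b} y * conv y)"
    using conv_nonneg conv_le by (intro integrable_indicator_interval_bounded[where C=B]) auto
  have "ennreal (integral\<^sup>L lborel (\<lambda>y. indicator {a..b} y * conv y))
      = (\<integral>\<^sup>+y. ennreal (indicator {a..b} y * conv y) \<partial>lborel)"
    by (rule nn_integral_eq_integral[OF conv_int, symmetric]) (auto simp: conv_nonneg)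
  also have "\<dots> = (\<integral>\<^sup>+y. \<integral>\<^sup>+\<eta>. H y \<eta> \<partial>lborel \<partial>lborel)"
    unfolding H_def conv_def
    by (intro nn_integral_cong, subst nn_integral_eq_integral)
       (auto intro!: integrable_conv_integrand simp: E_nonneg U_nonneg)
  also have "\<dots> = (\<integral>\<^sup>+\<eta>. \<integral>\<^sup>+y. H y \<eta> \<partial>lborel \<partial>lborel)"
    using lborel_pair.Fubini'[OF H_measurable] by simp
  also have "\<dots> = (\<integral>\<^sup>+\<eta>. ennreal (U \<eta> * (E_tail (a - \<eta>) - E_tail (b - \<eta>))) \<partial>lborel)"
  proof (rule nn_integral_cong)
    fix \<eta>
    have "(\<integral>\<^sup>+y. H y \<eta> \<partial>lborel) = ennreal (integral\<^sup>L lborel (\<lambda>y. indicator {a..b} y * E (y - \<eta>) * U \<eta>))"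
      unfolding H_def mult.assoc[symmetric]
      by (rule nn_integral_eq_integral) (auto intro!: integrable_indicator_E_shift simp: E_nonneg U_nonneg)
    then show "(\<integral>\<^sup>+y. H y \<eta> \<partial>lborel) = ennreal (U \<eta> * (E_tail (a - \<eta>) - E_tail (b - \<eta>)))"
      using integral_E_shift_interval[OF assms, of \<eta>] by (simp add: mult.commute)
  qed
  finally have eq: "(\<integral>\<^sup>+\<eta>. ennreal (U \<eta> * (E_tail (a - \<eta>) - E_tail (b - \<eta>))) \<partial>lborel)
      = ennreal (integral\<^sup>L lborel (\<lambda>y. indicator {a..b} y * conv y))" ..
  have "0 \<le> U \<eta> * (E_tail (a - \<eta>) - E_tail (b - \<eta>))" for \<eta>
    using E_tail_antimono[of "a - \<eta>" "b - \<eta>"] assms U_nonneg by auto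
  then have "integrable lborel (\<lambda>\<eta>. U \<eta> * (E_tail (a - \<eta>) - E_tail (b - \<eta>)))
      \<and> integral\<^sup>L lborel (\<lambda>\<eta>. U \<eta> * (E_tail (a - \<eta>) - E_tail (b - \<eta>)))
        = integral\<^sup>L lborel (\<lambda>y. indicator {a..b} y * conv y)"
    using eq by (subst (asm) nn_integral_eq_integrable) (auto intro!: integral_nonneg_AE simp: conv_nonneg)
  then show "integral\<^sup>L lborel (\<lambda>y. indicator {a..b} y * conv y)
      = integral\<^sup>L lborel (\<lambda>\<eta>. U \<eta> * (E_tail (a - \<eta>) - E_tail (b - \<eta>)))"
    and "integrable lborel (\<lambda>\<eta>. U \<eta> * (E_tail (a - \<eta>) - E_tail (b - \<eta>)))"
    by auto
qed

definition flux :: "real \<Rightarrow> real" where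
  "flux z = integral\<^sup>L lborel (\<lambda>\<eta>. U \<eta> * flux_kernel z \<eta>)"

lemma integrable_U_flux_kernel: "integrable lborel (\<lambda>\<eta>. U \<eta> * flux_kernel z \<eta>)"
proof (rule Bochner_Integration.integrable_bound)
  show "integrable lborel (\<lambda>\<eta>. B * \<bar>flux_kernel z \<eta>\<bar>)"
    using integrable_flux_kernel by simp
  show "AE \<eta> in lborel. norm (U \<eta> * flux_kernel z \<eta>) \<le> norm (B * \<bar>flux_kernel z \<eta>\<bar>)"
    using U_nonneg U_le B_nonneg by (auto intro!: AE_I2 mult_right_mono simp: abs_mult)
qed simp

lemma integral_interval_U_minus_conv:
  assumes "a \<le> b"
  shows "integral\<^sup>L lborel (\<lambda>y. indicator {a..b} y * (U y - conv y)) = flux a - flux b"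
proof -
  have U_int: "integrable lborel (\<lambda>y. indicator {a..b} y * U y)"
    using U_nonneg U_le by (intro integrable_indicator_interval_bounded[where C=B]) auto
  have conv_int: "integrable lborel (\<lambda>y. indicator {a..b} y * conv y)"
    using conv_nonneg conv_le by (intro integrable_indicator_interval_bounded[where C=B]) auto
  have "integral\<^sup>L lborel (\<lambda>y. indicator {a..b} y * (U y - conv y))
      = integral\<^sup>L lborel (\<lambda>y. indicator {a..b} y * U y - indicator {a..b} y * conv y)"
    by (simp add: right_diff_distrib)
  also have "\<dots> = integral\<^sup>L lborel (\<lambda>y. indicator {a..b} y * U y) - integral\<^sup>L lborel (\<lambda>y. indicator {a..b} y * conv y)"
    by (rule Bochner_Integration.integral_diff[OF U_int conv_int])
  also have "\<dots> = integral\<^sup>L lborel (\<lambda>\<eta>. indicator {a..b} \<eta> * U \<eta> - U \<eta> * (E_tail (a - \<eta>) - E_tail (b - \<eta>)))"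
    unfolding integral_interval_conv[OF assms]
    by (rule Bochner_Integration.integral_diff[OF U_int integrable_U_mult_E_tail_diff[OF assms], symmetric])
  also have "\<dots> = integral\<^sup>L lborel (\<lambda>\<eta>. U \<eta> * flux_kernel a \<eta> - U \<eta> * flux_kernel b \<eta>)"
    using AE_lborel_singleton[of b] assms
    by (intro integral_cong_AE) (auto elim!: eventually_mono simp: flux_kernel_def indicator_def algebra_simps)
  also have "\<dots> = flux a - flux b"
    unfolding flux_def by (rule Bochner_Integration.integral_diff[OF integrable_U_flux_kernel integrable_U_flux_kernel])
  finally show ?thesis .
qed

definition local_deviation :: "real \<Rightarrow> real \<Rightarrow> real \<Rightarrow> real" where
  "local_deviation z K R = integral\<^sup>L lborel (\<lambda>\<eta>. indicator {z - R..z + R} \<eta> * (\<bar>U \<eta> - K\<bar> * E (z - \<eta>)))"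

lemma integrable_local_deviation_integrand:
  "integrable lborel (\<lambda>\<eta>. indicator {z - R..z + R} \<eta> * (\<bar>U \<eta> - K\<bar> * E (z - \<eta>)))"
proof (rule Bochner_Integration.integrable_bound)
  show "integrable lborel (\<lambda>\<eta>. (B + \<bar>K\<bar>) * E (z - \<eta>))"
    using integrable_E_reflect by simp
  show "AE \<eta> in lborel. norm (indicator {z - R..z + R} \<eta> * (\<bar>U \<eta> - K\<bar> * E (z - \<eta>)))
      \<le> norm ((B + \<bar>K\<bar>) * E (z - \<eta>))"
  proof (rule AE_I2)
    fix \<eta>
    have "\<bar>U \<eta> - K\<bar> \<le> B + \<bar>K\<bar>"
      using U_nonneg[of \<eta>] U_le[of \<eta>] by linarith
    then show "norm (indicator {z - R..z + R} \<eta> * (\<bar>U \<eta> - K\<bar> * E (z - \<eta>))) \<le> norm ((B + \<bar>K\<bar>) * E (z - \<eta>))"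
      using E_nonneg[of "z - \<eta>"] B_nonneg by (auto simp: indicator_def abs_mult intro!: mult_right_mono)
  qed
qed simp

text \<open>By integral_flux_kernel the flux of a constant vanishes, so only the deviation of U from
  a constant K near z counts, up to exponentially small tails.\<close>
lemma abs_flux_le:
  assumes "0 \<le> K" "K \<le> B" "0 < R"
  shows "\<bar>flux z\<bar> \<le> B * exp (1 - R) + (R + 1) * exp (R + 1) * local_deviation z K R"
proof -
  define h where "h \<eta> = (R + 1) * exp (R + 1) * (indicator {z - R..z + R} \<eta> * (\<bar>U \<eta> - K\<bar> * E (z - \<eta>)))
      + B * (indicator {z + R<..} \<eta> * E_tail (\<eta> - z) + indicator {..<z - R} \<eta> * E_tail (z - \<eta>))" for \<eta>
  have h_int: "integrable lborel h"
    unfolding h_def using assms(3)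
    by (intro integrable_local_deviation_integrand integrable_E_tail_right integrable_E_tail_left
        Bochner_Integration.integrable_add Bochner_Integration.integrable_mult_right) simp_all
  have dev_int: "integrable lborel (\<lambda>\<eta>. (U \<eta> - K) * flux_kernel z \<eta>)"
    using integrable_U_flux_kernel integrable_flux_kernel by (simp add: left_diff_distrib)
  have "flux z = integral\<^sup>L lborel (\<lambda>\<eta>. (U \<eta> - K) * flux_kernel z \<eta>)"
    unfolding flux_def left_diff_distrib
    using integrable_U_flux_kernel integrable_flux_kernel integral_flux_kernel by simp
  also have "\<bar>\<dots>\<bar> \<le> integral\<^sup>L lborel (\<lambda>\<eta>. \<bar>(U \<eta> - K) * flux_kernel z \<eta>\<bar>)"
    using integral_norm_bound[of lborel "\<lambda>\<eta>. (U \<eta> - K) * flux_kernel z \<eta>"] by simp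
  also have "\<dots> \<le> integral\<^sup>L lborel h"
  proof (rule integral_mono_AE)
    show "integrable lborel (\<lambda>\<eta>. \<bar>(U \<eta> - K) * flux_kernel z \<eta>\<bar>)"
      using dev_int by simp
    show "AE \<eta> in lborel. \<bar>(U \<eta> - K) * flux_kernel z \<eta>\<bar> \<le> h \<eta>"
      using AE_lborel_singleton[of z]
    proof eventually_elim
      case (elim \<eta>)
      have "\<bar>U \<eta> - K\<bar> \<le> B"
        using U_nonneg[of \<eta>] U_le[of \<eta>] assms by linarith
      from abs_mult_flux_kernel_le[OF this assms(3) elim] show ?case
        unfolding h_def .
    qed
  qed (rule h_int)
  also have "integral\<^sup>L lborel h = (R + 1) * exp (R + 1) * local_deviation z K R
      + B * (2 * integral\<^sup>L lborel (\<lambda>x. indicator {R<..} x * E_tail x))"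
    unfolding h_def local_deviation_def using assms(3)
    by (simp add: Bochner_Integration.integral_add integrable_local_deviation_integrand
        integrable_E_tail_right integrable_E_tail_left integral_E_tail_right integral_E_tail_left)
  also have "\<dots> \<le> (R + 1) * exp (R + 1) * local_deviation z K R + B * exp (1 - R)"
    using integral_E_tail_greaterThan_le[of R] assms(3) B_nonneg by (simp add: mult_left_mono)
  finally show ?thesis
    by linarith
qed

lemma local_deviation_le_of_upper:
  assumes "T \<le> z - R" "0 \<le> K" "\<And>\<eta>. T \<le> \<eta> \<Longrightarrow> U \<eta> \<le> K"
  shows "local_deviation z K R \<le> K - conv z + B * E_tail (z - T)"
proof -
  have "local_deviation z K R
      \<le> integral\<^sup>L lborel (\<lambda>\<eta>. K * (indicator {T..} \<eta> * E (z - \<eta>)) - indicator {T..} \<eta> * (E (z - \<eta>) * U \<eta>))"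
    unfolding local_deviation_def
  proof (rule integral_mono[OF integrable_local_deviation_integrand])
    show "integrable lborel (\<lambda>\<eta>. K * (indicator {T..} \<eta> * E (z - \<eta>)) - indicator {T..} \<eta> * (E (z - \<eta>) * U \<eta>))"
      by (intro Bochner_Integration.integrable_diff Bochner_Integration.integrable_mult_right
          integrable_indicator_E_reflect integrable_indicator_conv_integrand) simp_all
    fix x
    show "indicator {z - R..z + R} x * (\<bar>U x - K\<bar> * E (z - x))
        \<le> K * (indicator {T..} x * E (z - x)) - indicator {T..} x * (E (z - x) * U x)"
    proof (cases "T \<le> x")
      case True
      then have "indicator {z - R..z + R} x * (\<bar>U x - K\<bar> * E (z - x)) \<le> (K - U x) * E (z - x)"
        using assms(3)[OF True] E_nonneg[of "z - x"] by (auto simp: indicator_def)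
      then show ?thesis
        using True by (simp add: algebra_simps)
    qed (use assms(1) in \<open>auto simp: indicator_def\<close>)
  qed
  also have "\<dots> = K * (1 - E_tail (z - T)) - integral\<^sup>L lborel (\<lambda>\<eta>. indicator {T..} \<eta> * (E (z - \<eta>) * U \<eta>))"
    by (simp add: Bochner_Integration.integral_diff integrable_indicator_E_reflect
        integrable_indicator_conv_integrand integral_E_reflect_atLeast)
  also have "\<dots> \<le> K - conv z + B * E_tail (z - T)"
    unfolding right_diff_distrib mult_1_right
    using integral_atLeast_conv_integrand_bounds(1)[of z T] mult_nonneg_nonneg[OF assms(2) E_tail_nonneg[of "z - T"]]
    by linarith
  finally show ?thesis .
qed

lemma local_deviation_le_of_lower:
  assumes "T \<le> z - R" "K \<le> B" "\<And>\<eta>. T \<le> \<eta> \<Longrightarrow> K \<le> U \<eta>"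
  shows "local_deviation z K R \<le> conv z - K + B * E_tail (z - T)"
proof -
  have "local_deviation z K R
      \<le> integral\<^sup>L lborel (\<lambda>\<eta>. indicator {T..} \<eta> * (E (z - \<eta>) * U \<eta>) - K * (indicator {T..} \<eta> * E (z - \<eta>)))"
    unfolding local_deviation_def
  proof (rule integral_mono[OF integrable_local_deviation_integrand])
    show "integrable lborel (\<lambda>\<eta>. indicator {T..} \<eta> * (E (z - \<eta>) * U \<eta>) - K * (indicator {T..} \<eta> * E (z - \<eta>)))"
      by (intro Bochner_Integration.integrable_diff Bochner_Integration.integrable_mult_right
          integrable_indicator_E_reflect integrable_indicator_conv_integrand) simp_all
    fix x
    show "indicator {z - R..z + R} x * (\<bar>U x - K\<bar> * E (z - x))
        \<le> indicator {T..} x * (E (z - x) * U x) - K * (indicator {T..} x * E (z - x))"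
    proof (cases "T \<le> x")
      case True
      then have "indicator {z - R..z + R} x * (\<bar>U x - K\<bar> * E (z - x)) \<le> (U x - K) * E (z - x)"
        using assms(3)[OF True] E_nonneg[of "z - x"] by (auto simp: indicator_def)
      then show ?thesis
        using True by (simp add: algebra_simps)
    qed (use assms(1) in \<open>auto simp: indicator_def\<close>)
  qed
  also have "\<dots> = integral\<^sup>L lborel (\<lambda>\<eta>. indicator {T..} \<eta> * (E (z - \<eta>) * U \<eta>)) - K * (1 - E_tail (z - T))"
    by (simp add: Bochner_Integration.integral_diff integrable_indicator_E_reflect
        integrable_indicator_conv_integrand integral_E_reflect_atLeast)
  also have "\<dots> \<le> conv z - K + B * E_tail (z - T)"
    using integral_atLeast_conv_integrand_bounds(2)[of T z] mult_right_mono[OF assms(2) E_tail_nonneg[of "z - T"]]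
    by (simp add: algebra_simps)
  finally show ?thesis .
qed

lemma B_mult_E_tail_le:
  assumes "T + 2 * R \<le> z" "0 < R"
  shows "B * E_tail (z - T) \<le> B * exp (1 - 2 * R) / 2"
proof -
  have "E_tail (z - T) \<le> exp (1 - (z - T)) / 2"
    using assms by (intro E_tail_le_exp) linarith
  also have "\<dots> \<le> exp (1 - 2 * R) / 2"
    using assms(1) by simp
  finally have "E_tail (z - T) \<le> exp (1 - 2 * R) / 2" .
  from mult_left_mono[OF this B_nonneg] show ?thesis
    by simp
qed

lemma abs_flux_le_near_sup:
  assumes "0 \<le> K" "K \<le> B" "0 < R" "T + 2 * R \<le> z"
    and "\<And>\<eta>. T \<le> \<eta> \<Longrightarrow> U \<eta> \<le> K" "U z \<le> conv z"
  shows "\<bar>flux z\<bar> \<le> B * exp (1 - R) + (R + 1) * exp (R + 1) * (K - U z + B * exp (1 - 2 * R) / 2)"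
proof -
  have "local_deviation z K R \<le> K - U z + B * exp (1 - 2 * R) / 2"
    using local_deviation_le_of_upper[of T z R K] B_mult_E_tail_le[of T R z] assms by fastforce
  then have "(R + 1) * exp (R + 1) * local_deviation z K R
      \<le> (R + 1) * exp (R + 1) * (K - U z + B * exp (1 - 2 * R) / 2)"
    using assms(3) by (intro mult_left_mono) auto
  then show ?thesis
    using abs_flux_le[OF assms(1-3), of z] by linarith
qed

lemma abs_flux_le_near_inf:
  assumes "0 \<le> K" "K \<le> B" "0 < R" "T + 2 * R \<le> z"
    and "\<And>\<eta>. T \<le> \<eta> \<Longrightarrow> K \<le> U \<eta>" "conv z \<le> U z"
  shows "\<bar>flux z\<bar> \<le> B * exp (1 - R) + (R + 1) * exp (R + 1) * (U z - K + B * exp (1 - 2 * R) / 2)"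
proof -
  have "local_deviation z K R \<le> U z - K + B * exp (1 - 2 * R) / 2"
    using local_deviation_le_of_lower[of T z R K] B_mult_E_tail_le[of T R z] assms by fastforce
  then have "(R + 1) * exp (R + 1) * local_deviation z K R
      \<le> (R + 1) * exp (R + 1) * (U z - K + B * exp (1 - 2 * R) / 2)"
    using assms(3) by (intro mult_left_mono) auto
  then show ?thesis
    using abs_flux_le[OF assms(1-3), of z] by linarith
qed

end

section \<open>Critical points and oscillation\<close>

lemma power4_diff_le:
  fixes x y M :: real
  assumes "0 \<le> y" "y \<le> x" "x \<le> M"
  shows "x ^ 4 - y ^ 4 \<le> 4 * M ^ 3 * (x - y)"
proof -
  have "x ^ 4 - y ^ 4 = (x - y) * (x ^ 3 + x ^ 2 * y + x * y ^ 2 + y ^ 3)"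
    by algebra
  also have "\<dots> \<le> (x - y) * (4 * M ^ 3)"
  proof (rule mult_left_mono)
    have "x ^ 2 * y \<le> x ^ 2 * x" "x * y ^ 2 \<le> x * x ^ 2"
      using assms by (auto intro!: mult_left_mono power_mono)
    moreover have "y ^ 3 \<le> x ^ 3" "x ^ 3 \<le> M ^ 3"
      using assms by (auto intro!: power_mono)
    ultimately show "x ^ 3 + x ^ 2 * y + x * y ^ 2 + y ^ 3 \<le> 4 * M ^ 3"
      by (simp add: power2_eq_square power3_eq_cube mult.assoc)
  qed (use assms in simp)
  finally show ?thesis
    by (simp add: mult.commute)
qed

lemma local_max_derivatives:
  fixes g g' g'' :: "real \<Rightarrow> real"
  assumes "a < x" "x < b"
    and deriv: "\<And>y. a < y \<Longrightarrow> y < b \<Longrightarrow> (g has_real_derivative g' y) (at y)"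
    and deriv2: "(g' has_real_derivative g'' x) (at x)"
    and max: "\<And>y. a < y \<Longrightarrow> y < b \<Longrightarrow> g y \<le> g x"
  shows "g' x = 0" "g'' x \<le> 0"
proof -
  show g'_x: "g' x = 0"
    by (rule DERIV_local_max[OF deriv[OF assms(1,2)], of "min (x - a) (b - x)"])
       (use assms max in auto)
  show "g'' x \<le> 0"
  proof (rule ccontr)
    assume "\<not> g'' x \<le> 0"
    then obtain e where e: "0 < e" "\<forall>h>0. h < e \<longrightarrow> g' x < g' (x + h)"
      using DERIV_pos_inc_right[OF deriv2] by auto
    define h where "h = min (e / 2) ((b - x) / 2)"
    have h_le: "h \<le> e / 2" "h \<le> (b - x) / 2"
      unfolding h_def by (rule min.cobounded1 min.cobounded2)+
    have h_pos: "0 < h"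
      using e assms by (simp add: h_def)
    have "h < e"
      using h_le(1) e(1) by linarith
    moreover have "x + h < b"
      using h_le(2) assms(2) by argo
    ultimately have h: "0 < h" "h < e" "x + h < b"
      using h_pos by blast+
    have "g x < g (x + h)"
    proof (rule DERIV_pos_imp_increasing_open[of x "x + h" g])
      fix y assume "x < y" "y < x + h"
      then show "\<exists>D. (g has_real_derivative D) (at y) \<and> 0 < D"
        using deriv[of y] e(2)[rule_format, of "y - x"] g'_x h assms by (intro exI[of _ "g' y"]) auto
    next
      show "continuous_on {x..x + h} g"
      proof (intro continuous_at_imp_continuous_on ballI)
        fix y assume "y \<in> {x..x + h}"
        then show "isCont g y"
          using h assms by (intro DERIV_isCont[OF deriv]) auto
      qed
    qed (use h in simp)
    moreover have "g (x + h) \<le> g x"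
      using h assms by (intro max) auto
    ultimately show False
      by simp
  qed
qed

lemma interior_max_critical:
  fixes g g' g'' :: "real \<Rightarrow> real"
  assumes "a < p" "p < b" "g a < g p" "g b < g p"
    and deriv: "\<And>y. a \<le> y \<Longrightarrow> y \<le> b \<Longrightarrow> (g has_real_derivative g' y) (at y)"
    and deriv2: "\<And>y. a < y \<Longrightarrow> y < b \<Longrightarrow> (g' has_real_derivative g'' y) (at y)"
  obtains x where "a < x" "x < b" "g p \<le> g x" "g' x = 0" "g'' x \<le> 0"
proof -
  have "continuous_on {a..b} g"
    using deriv by (intro continuous_at_imp_continuous_on ballI DERIV_isCont) auto
  then obtain x where x: "x \<in> {a..b}" "\<And>y. y \<in> {a..b} \<Longrightarrow> g y \<le> g x"
    using continuous_attains_sup[of "{a..b}" g] assms(1,2) by auto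
  have "g p \<le> g x"
    using x(2)[of p] assms(1,2) by simp
  with x(1) assms(3,4) have "a < x" "x < b"
    by (auto simp: order.order_iff_strict)
  moreover have "g' x = 0" "g'' x \<le> 0"
    using local_max_derivatives[of a x b g g' g''] \<open>a < x\<close> \<open>x < b\<close> deriv deriv2 x(2) by auto
  ultimately show thesis
    using \<open>g p \<le> g x\<close> that by blast
qed

lemma interior_min_critical:
  fixes g g' g'' :: "real \<Rightarrow> real"
  assumes "a < p" "p < b" "g p < g a" "g p < g b"
    and deriv: "\<And>y. a \<le> y \<Longrightarrow> y \<le> b \<Longrightarrow> (g has_real_derivative g' y) (at y)"
    and deriv2: "\<And>y. a < y \<Longrightarrow> y < b \<Longrightarrow> (g' has_real_derivative g'' y) (at y)"
  obtains x where "a < x" "x < b" "g x \<le> g p" "g' x = 0" "0 \<le> g'' x"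
proof -
  obtain x where "a < x" "x < b" "- g p \<le> - g x" "- g' x = 0" "- g'' x \<le> 0"
    by (rule interior_max_critical[of a p b "\<lambda>y. - g y" "\<lambda>y. - g' y" "\<lambda>y. - g'' y"])
       (use assms in \<open>auto intro!: derivative_intros\<close>)
  then show thesis
    using that by simp
qed

lemma bounded_tail_Sup_Inf:
  fixes g :: "real \<Rightarrow> real"
  assumes bounded: "\<And>y. 0 \<le> y \<Longrightarrow> 0 \<le> g y \<and> g y \<le> C" and T: "0 \<le> T"
  shows "\<And>y. T \<le> y \<Longrightarrow> Inf (g ` {T..}) \<le> g y \<and> g y \<le> Sup (g ` {T..})"
    and "0 \<le> Inf (g ` {T..})" "Sup (g ` {T..}) \<le> C"
    and "\<And>T'. T \<le> T' \<Longrightarrow> Sup (g ` {T'..}) \<le> Sup (g ` {T..}) \<and> Inf (g ` {T..}) \<le> Inf (g ` {T'..})"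
proof -
  have range: "0 \<le> x \<and> x \<le> C" if x: "x \<in> g ` {T..}" for x
  proof -
    obtain y where "T \<le> y" "x = g y"
      using x by auto
    then show ?thesis
      using bounded[of y] T by simp
  qed
  have bdd: "bdd_above (g ` {T..})" "bdd_below (g ` {T..})"
    by (rule bdd_aboveI[where M=C], use range in blast) (rule bdd_belowI[where m=0], use range in blast)
  show "Inf (g ` {T..}) \<le> g y \<and> g y \<le> Sup (g ` {T..})" if "T \<le> y" for y
  proof -
    have "g y \<in> g ` {T..}"
      using that by simp
    from cInf_lower[OF this bdd(2)] cSup_upper[OF this bdd(1)] show ?thesis
      by simp
  qed
  show "0 \<le> Inf (g ` {T..})"
    by (rule cInf_greatest) (use range in blast)+
  show "Sup (g ` {T..}) \<le> C"
    by (rule cSup_least) (use range in blast)+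
  show "Sup (g ` {T'..}) \<le> Sup (g ` {T..}) \<and> Inf (g ` {T..}) \<le> Inf (g ` {T'..})" if "T \<le> T'" for T'
  proof -
    have sub: "g ` {T'..} \<subseteq> g ` {T..}" and ne: "g ` {T'..} \<noteq> {}"
      using that by auto
    show ?thesis
      using cSup_subset_mono[OF ne bdd(1) sub] cInf_superset_mono[OF ne bdd(2) sub] by simp
  qed
qed

lemma tail_sup_inf_approx:
  fixes g :: "real \<Rightarrow> real"
  assumes bounded: "\<And>y. 0 \<le> y \<Longrightarrow> 0 \<le> g y \<and> g y \<le> C" and "0 < \<eta>"
  obtains T where "0 \<le> T"
    "\<And>T'. \<exists>x\<ge>T'. Sup (g ` {T..}) - \<eta> < g x" "\<And>T'. \<exists>y\<ge>T'. g y < Inf (g ` {T..}) + \<eta>"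
proof -
  define sup_tail where "sup_tail T = Sup (g ` {T..})" for T
  define inf_tail where "inf_tail T = Inf (g ` {T..})" for T
  have tail_mono: "sup_tail T' \<le> sup_tail T \<and> inf_tail T \<le> inf_tail T'"
    if T: "0 \<le> T" and T': "T \<le> T'" for T T'
    unfolding sup_tail_def inf_tail_def by (rule bounded_tail_Sup_Inf(4)[where g=g and C=C and T=T, OF bounded T T'])
  define M where "M = Inf (sup_tail ` {0..})"
  define m where "m = Sup (inf_tail ` {0..})"
  have "0 \<le> sup_tail T" "inf_tail T \<le> C" if T: "0 \<le> T" for T
    unfolding sup_tail_def inf_tail_def
    using bounded_tail_Sup_Inf(1)[where g=g and C=C and T=T, OF bounded T order_refl]
      bounded_tail_Sup_Inf(2,3)[where g=g and C=C and T=T, OF bounded T]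
    by auto
  then have "bdd_below (sup_tail ` {0..})" "bdd_above (inf_tail ` {0..})"
    by (auto intro!: bdd_belowI2[where m=0] bdd_aboveI2[where M=C])
  then have M_le: "M \<le> sup_tail T" and m_ge: "inf_tail T \<le> m" if T: "0 \<le> T" for T
    unfolding M_def m_def using T by (simp_all add: cInf_lower cSup_upper)
  obtain T1 where T1: "0 \<le> T1" "sup_tail T1 < M + \<eta>"
    using cInf_lessD[of "sup_tail ` {0..}" "M + \<eta>"] \<open>0 < \<eta>\<close> unfolding M_def by auto
  obtain T2 where T2: "0 \<le> T2" "m - \<eta> < inf_tail T2"
    using less_cSupD[of "inf_tail ` {0..}" "m - \<eta>"] \<open>0 < \<eta>\<close> unfolding m_def by auto
  define T where "T = max T1 T2"
  have T: "0 \<le> T" "sup_tail T < M + \<eta>" "m - \<eta> < inf_tail T"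
    using T1 T2 tail_mono[of T1 T] tail_mono[of T2 T] by (auto simp: T_def)
  show thesis
  proof (rule that[OF T(1)])
    fix T'
    have "sup_tail T - \<eta> < sup_tail (max 0 T')"
      using T M_le[of "max 0 T'"] by simp
    then obtain x where "x \<in> {max 0 T'..}" "Sup (g ` {T..}) - \<eta> < g x"
      using less_cSupD[of "g ` {max 0 T'..}" "sup_tail T - \<eta>"] unfolding sup_tail_def by blast
    then show "\<exists>x\<ge>T'. Sup (g ` {T..}) - \<eta> < g x"
      by auto
    have "inf_tail (max 0 T') < inf_tail T + \<eta>"
      using T m_ge[of "max 0 T'"] by simp
    then obtain y where "y \<in> {max 0 T'..}" "g y < Inf (g ` {T..}) + \<eta>"
      using cInf_lessD[of "g ` {max 0 T'..}" "inf_tail T + \<eta>"] unfolding inf_tail_def by blast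
    then show "\<exists>y\<ge>T'. g y < Inf (g ` {T..}) + \<eta>"
      by auto
  qed
qed

lemma tail_sup_inf_gap:
  fixes g :: "real \<Rightarrow> real"
  assumes bounded: "\<And>y. 0 \<le> y \<Longrightarrow> 0 \<le> g y \<and> g y \<le> C"
    and oscillates: "\<And>T. \<exists>x\<ge>T. \<exists>y\<ge>T. \<delta> \<le> \<bar>g x - g y\<bar>"
    and "0 < \<eta>"
  obtains T S I where "0 \<le> T" "0 \<le> I" "S \<le> C" "\<delta> \<le> S - I"
    "\<And>y. T \<le> y \<Longrightarrow> I \<le> g y \<and> g y \<le> S"
    "\<And>T'. \<exists>x\<ge>T'. S - \<eta> < g x" "\<And>T'. \<exists>y\<ge>T'. g y < I + \<eta>"
proof -
  obtain T where T: "0 \<le> T" and high: "\<And>T'. \<exists>x\<ge>T'. Sup (g ` {T..}) - \<eta> < g x"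
    and low: "\<And>T'. \<exists>y\<ge>T'. g y < Inf (g ` {T..}) + \<eta>"
    using tail_sup_inf_approx[where g=g and C=C, OF bounded \<open>0 < \<eta>\<close>] by blast
  note tail = bounded_tail_Sup_Inf[where g=g and C=C and T=T, OF bounded T]
  show thesis
  proof (rule that[of T "Inf (g ` {T..})" "Sup (g ` {T..})", OF T tail(2,3) _ tail(1) high low])
    obtain x y where "T \<le> x" "T \<le> y" "\<delta> \<le> \<bar>g x - g y\<bar>"
      using oscillates[of T] by auto
    then show "\<delta> \<le> Sup (g ` {T..}) - Inf (g ` {T..})"
      using tail(1)[of x] tail(1)[of y] by linarith
  qed
qed

lemma flux_error_small:
  fixes B C \<epsilon> :: real
  assumes "0 \<le> B" "0 \<le> C" "0 < \<epsilon>"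
  obtains R e where "0 < R" "0 < e"
    "B * exp (1 - R) + (R + 1) * exp (R + 1) * (C * e + B * exp (1 - 2 * R) / 2) < \<epsilon>"
proof -
  have "((\<lambda>R::real. exp (1 - R) + (R + 1) * exp (R + 1) * (exp (1 - 2 * R) / 2)) \<longlongrightarrow> 0) at_top"
    by real_asymp
  then have "((\<lambda>R. B * (exp (1 - R) + (R + 1) * exp (R + 1) * (exp (1 - 2 * R) / 2))) \<longlongrightarrow> 0) at_top"
    using tendsto_mult_right_zero by blast
  then have "\<forall>\<^sub>F R in at_top. 0 < R \<and> B * (exp (1 - R) + (R + 1) * exp (R + 1) * (exp (1 - 2 * R) / 2)) < \<epsilon> / 2"
    using assms(3) by (intro eventually_conj eventually_gt_at_top order_tendstoD(2)) auto
  then obtain R where R: "0 < R" "B * (exp (1 - R) + (R + 1) * exp (R + 1) * (exp (1 - 2 * R) / 2)) < \<epsilon> / 2"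
    by (auto dest: eventually_happens)
  define A where "A = (R + 1) * exp (R + 1)"
  have A: "0 < A"
    using R(1) by (simp add: A_def)
  define e where "e = \<epsilon> / (2 * A * (C + 1))"
  have e: "0 < e"
    using A assms by (simp add: e_def)
  have "A * (C * e) \<le> A * ((C + 1) * e)"
    using A e by (intro mult_left_mono) auto
  also have "\<dots> = \<epsilon> / 2"
    using A assms(2) by (simp add: e_def)
  finally have "A * (C * e) \<le> \<epsilon> / 2" .
  moreover have "B * exp (1 - R) + A * (C * e + B * exp (1 - 2 * R) / 2)
      = B * (exp (1 - R) + A * (exp (1 - 2 * R) / 2)) + A * (C * e)"
    by (simp add: algebra_simps)
  ultimately show thesis
    using that[OF R(1) e] R(2) unfolding A_def by linarith
qed

lemma osc_le:
  assumes "I \<noteq> {}" "\<And>y1 y2. y1 \<in> I \<Longrightarrow> y2 \<in> I \<Longrightarrow> \<bar>g y1 - g y2\<bar> \<le> e"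
  shows "osc I g \<le> e"
  unfolding osc_def using assms by (intro cSUP_least) auto

lemma osc_nonneg:
  fixes g :: "real \<Rightarrow> real"
  assumes "x \<in> I" "\<And>y. y \<in> I \<Longrightarrow> \<bar>g y\<bar> \<le> B"
  shows "0 \<le> osc I g"
proof -
  have bounded: "\<bar>g y1 - g y2\<bar> \<le> 2 * B" if "y1 \<in> I" "y2 \<in> I" for y1 y2
    using assms(2)[OF that(1)] assms(2)[OF that(2)] by linarith
  have "bdd_above ((\<lambda>y2. \<bar>g x - g y2\<bar>) ` I)"
    by (rule bdd_aboveI2[where M="2 * B"]) (rule bounded[OF assms(1)])
  from cSUP_upper[OF assms(1) this] have "0 \<le> (SUP y2\<in>I. \<bar>g x - g y2\<bar>)"
    by simp
  also have "\<dots> \<le> osc I g"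
    unfolding osc_def
  proof (rule cSUP_upper[OF assms(1)])
    show "bdd_above ((\<lambda>y1. SUP y2\<in>I. \<bar>g y1 - g y2\<bar>) ` I)"
      using assms(1) bounded by (intro bdd_aboveI2[where M="2 * B"] cSUP_least) auto
  qed
  finally show ?thesis .
qed

lemma DERIV_shift_left:
  fixes f :: "real \<Rightarrow> real"
  shows "(f has_real_derivative D) (at (a + y)) \<Longrightarrow> ((\<lambda>y. f (a + y)) has_real_derivative D) (at y)"
  using DERIV_shift[of f D y a] by (simp add: add.commute)

lemma deriv_shift_left:
  fixes f :: "real \<Rightarrow> real"
  shows "deriv (\<lambda>y. f (a + y)) y = deriv f (a + y)"
proof -
  have "((\<lambda>y. f (a + y)) has_real_derivative D) (at y) \<longleftrightarrow> (f has_real_derivative D) (at (a + y))" for D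
    using DERIV_shift[of f D y a] by (simp add: add.commute)
  then show ?thesis
    unfolding deriv_def by simp
qed

section \<open>Convergence of the profile at infinity\<close>

locale nonlocal_profile =
  fixes f :: "real \<Rightarrow> real" and c TM :: real
  assumes c_pos: "0 < c"
    and has_deriv: "\<And>y. 0 < y \<Longrightarrow> (f has_real_derivative deriv f y) (at y)"
    and has_deriv2: "\<And>y. 0 < y \<Longrightarrow> (deriv f has_real_derivative deriv (deriv f) y) (at y)"
    and equation: "\<And>y. 0 < y \<Longrightarrow>
      deriv (deriv f) y - c * deriv f y - f y ^ 4 = - (LINT \<eta>:{0..}|lborel. E (y - \<eta>) * f \<eta> ^ 4)"
    and bounds: "\<And>y. 0 \<le> y \<Longrightarrow> 0 \<le> f y \<and> f y \<le> TM"
begin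

lemma TM_nonneg: "0 \<le> TM"
  using bounds[of 0] by simp

definition source :: "real \<Rightarrow> real" where
  "source \<eta> = indicator {0..} \<eta> * f \<eta> ^ 4"

lemma source_measurable: "source \<in> borel_measurable borel"
proof -
  have "continuous_on {0<..} f"
    by (intro continuous_at_imp_continuous_on ballI DERIV_isCont[OF has_deriv]) simp
  then have "(\<lambda>x. indicator {0<..} x *\<^sub>R f x ^ 4) \<in> borel_measurable borel"
    by (intro borel_measurable_continuous_on_indicator) (auto intro!: continuous_intros)
  moreover have "source = (\<lambda>x. indicator {0<..} x *\<^sub>R f x ^ 4 + indicator {0} x * f 0 ^ 4)"
    by (auto simp: source_def fun_eq_iff indicator_def)
  ultimately show ?thesis
    by simp
qed

sublocale bounded_source source "TM ^ 4"
  using source_measurable bounds by unfold_locales (auto simp: source_def indicator_def intro: power_mono)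

lemma profile_ode: "0 < y \<Longrightarrow> deriv (deriv f) y - c * deriv f y = source y - conv y"
proof -
  assume "0 < y"
  have "(LINT \<eta>:{0..}|lborel. E (y - \<eta>) * f \<eta> ^ 4) = conv y"
    unfolding conv_def set_lebesgue_integral_def
    by (rule Bochner_Integration.integral_cong) (auto simp: source_def)
  then show ?thesis
    using equation[OF \<open>0 < y\<close>] \<open>0 < y\<close> by (simp add: source_def)
qed

lemma integrated_profile_ode:
  assumes "0 < a" "a \<le> b"
  shows "integral\<^sup>L lborel (\<lambda>y. indicator {a..b} y * (source y - conv y))
    = (deriv f b - c * f b) - (deriv f a - c * f a)"
proof -
  have "((\<lambda>y. deriv (deriv f) y - c * deriv f y) has_integral (deriv f b - c * f b) - (deriv f a - c * f a)) {a..b}"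
  proof (rule fundamental_theorem_of_calculus[OF assms(2)])
    fix x assume "x \<in> {a..b}"
    then have "0 < x"
      using assms by auto
    then have "((\<lambda>y. deriv f y - c * f y) has_real_derivative deriv (deriv f) x - c * deriv f x) (at x)"
      by (intro DERIV_diff DERIV_cmult has_deriv has_deriv2)
    then show "((\<lambda>y. deriv f y - c * f y) has_vector_derivative deriv (deriv f) x - c * deriv f x) (at x within {a..b})"
      by (simp add: has_real_derivative_iff_has_vector_derivative has_vector_derivative_at_within)
  qed
  then have "((\<lambda>y. source y - conv y) has_integral (deriv f b - c * f b) - (deriv f a - c * f a)) {a..b}"
    by (rule has_integral_eq[rotated]) (use assms in \<open>auto simp: profile_ode\<close>)
  then have "integral {a..b} (\<lambda>y. source y - conv y) = (deriv f b - c * f b) - (deriv f a - c * f a)"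
    by (rule integral_unique)
  moreover have "\<bar>source y - conv y\<bar> \<le> TM ^ 4" for y
    using U_nonneg[of y] U_le[of y] conv_nonneg[of y] conv_le[of y] by (simp add: abs_le_iff)
  then have "set_integrable lborel {a..b} (\<lambda>y. source y - conv y)"
    using integrable_indicator_interval_bounded[of "\<lambda>y. source y - conv y" "TM ^ 4" a b]
    by (simp add: set_integrable_def)
  ultimately show ?thesis
    using set_borel_integral_eq_integral(2)[of "{a..b}" "\<lambda>y. source y - conv y"]
    unfolding set_lebesgue_integral_def by simp
qed

lemma flux_balance:
  assumes "0 < a" "0 < b" "deriv f a = 0" "deriv f b = 0"
  shows "c * (f a - f b) = flux a - flux b"
proof -
  have *: "c * (f a - f b) = flux a - flux b"
    if "0 < a" "a \<le> b" "deriv f a = 0" "deriv f b = 0" for a b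
    using integrated_profile_ode[OF that(1,2)] integral_interval_U_minus_conv[OF that(2)] that(3,4)
    by (simp add: algebra_simps)
  show ?thesis
  proof (cases "a \<le> b")
    case False
    then show ?thesis
      using *[of b a] assms by (simp add: algebra_simps)
  qed (use * assms in blast)
qed

lemma abs_flux_le_near_max:
  assumes "0 \<le> T" "0 < R" "T + 2 * R \<le> z"
    and "\<And>y. T \<le> y \<Longrightarrow> f y \<le> S" "S \<le> TM" "S - e \<le> f z"
    and "deriv f z = 0" "deriv (deriv f) z \<le> 0"
  shows "\<bar>flux z\<bar> \<le> TM ^ 4 * exp (1 - R) + (R + 1) * exp (R + 1) * (4 * TM ^ 3 * e + TM ^ 4 * exp (1 - 2 * R) / 2)"
proof -
  have z: "0 < z"
    using assms(1-3) by linarith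
  have fz: "0 \<le> f z" "f z \<le> S"
    using bounds[of z] assms(1-4) z by auto
  have "\<bar>flux z\<bar> \<le> TM ^ 4 * exp (1 - R) + (R + 1) * exp (R + 1) * (S ^ 4 - source z + TM ^ 4 * exp (1 - 2 * R) / 2)"
  proof (rule abs_flux_le_near_sup[OF _ _ assms(2,3)])
    show "0 \<le> S ^ 4" "S ^ 4 \<le> TM ^ 4"
      using fz assms(5) by (auto intro: power_mono)
    show "source \<eta> \<le> S ^ 4" if "T \<le> \<eta>" for \<eta>
      using that assms(1,4) bounds[of \<eta>] by (auto simp: source_def intro!: power_mono)
    show "source z \<le> conv z"
      using profile_ode[OF z] assms(7,8) by simp
  qed
  moreover have "S ^ 4 - source z \<le> 4 * TM ^ 3 * e"
  proof -
    have "S ^ 4 - source z \<le> 4 * TM ^ 3 * (S - f z)"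
      using power4_diff_le[of "f z" S TM] fz assms(5) z by (simp add: source_def)
    also have "\<dots> \<le> 4 * TM ^ 3 * e"
      using assms(6) TM_nonneg by (intro mult_left_mono) auto
    finally show ?thesis .
  qed
  then have "(R + 1) * exp (R + 1) * (S ^ 4 - source z + TM ^ 4 * exp (1 - 2 * R) / 2)
      \<le> (R + 1) * exp (R + 1) * (4 * TM ^ 3 * e + TM ^ 4 * exp (1 - 2 * R) / 2)"
    using assms(2) by (intro mult_left_mono) auto
  ultimately show ?thesis
    by linarith
qed

lemma abs_flux_le_near_min:
  assumes "0 \<le> T" "0 < R" "T + 2 * R \<le> z"
    and "\<And>y. T \<le> y \<Longrightarrow> I \<le> f y" "0 \<le> I" "f z \<le> I + e"
    and "deriv f z = 0" "0 \<le> deriv (deriv f) z"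
  shows "\<bar>flux z\<bar> \<le> TM ^ 4 * exp (1 - R) + (R + 1) * exp (R + 1) * (4 * TM ^ 3 * e + TM ^ 4 * exp (1 - 2 * R) / 2)"
proof -
  have z: "0 < z"
    using assms(1-3) by linarith
  have fz: "I \<le> f z" "f z \<le> TM"
    using bounds[of z] assms(1-4) z by auto
  have "\<bar>flux z\<bar> \<le> TM ^ 4 * exp (1 - R) + (R + 1) * exp (R + 1) * (source z - I ^ 4 + TM ^ 4 * exp (1 - 2 * R) / 2)"
  proof (rule abs_flux_le_near_inf[OF _ _ assms(2,3)])
    show "0 \<le> I ^ 4" "I ^ 4 \<le> TM ^ 4"
      using fz assms(5) by (auto intro: power_mono)
    show "I ^ 4 \<le> source \<eta>" if "T \<le> \<eta>" for \<eta>
      using that assms(1,4,5) by (auto simp: source_def intro!: power_mono)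
    show "conv z \<le> source z"
      using profile_ode[OF z] assms(7,8) by simp
  qed
  moreover have "source z - I ^ 4 \<le> 4 * TM ^ 3 * e"
  proof -
    have "source z - I ^ 4 \<le> 4 * TM ^ 3 * (f z - I)"
      using power4_diff_le[of I "f z" TM] fz assms(5) z by (simp add: source_def)
    also have "\<dots> \<le> 4 * TM ^ 3 * e"
      using assms(6) TM_nonneg by (intro mult_left_mono) auto
    finally show ?thesis .
  qed
  then have "(R + 1) * exp (R + 1) * (source z - I ^ 4 + TM ^ 4 * exp (1 - 2 * R) / 2)
      \<le> (R + 1) * exp (R + 1) * (4 * TM ^ 3 * e + TM ^ 4 * exp (1 - 2 * R) / 2)"
    using assms(2) by (intro mult_left_mono) auto
  ultimately show ?thesis
    by linarith
qed

lemma late_critical_max_above: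
  assumes "0 < T" "\<And>T'. \<exists>x\<ge>T'. v < f x" "\<And>T'. \<exists>y\<ge>T'. f y < v"
  obtains a where "T < a" "v < f a" "deriv f a = 0" "deriv (deriv f) a \<le> 0"
proof -
  obtain q1 where q1: "T \<le> q1" "f q1 < v"
    using assms(3) by blast
  obtain p where p: "q1 + 1 \<le> p" "v < f p"
    using assms(2) by blast
  obtain q2 where q2: "p + 1 \<le> q2" "f q2 < v"
    using assms(3) by blast
  obtain a where "q1 < a" "a < q2" "f p \<le> f a" "deriv f a = 0" "deriv (deriv f) a \<le> 0"
    by (rule interior_max_critical[of q1 p q2 f "deriv f" "deriv (deriv f)"])
       (use q1 p q2 assms(1) in \<open>auto intro!: has_deriv has_deriv2\<close>)
  then show thesis
    using q1 p by (intro that[of a]) auto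
qed

lemma late_critical_min_below:
  assumes "0 < T" "\<And>T'. \<exists>x\<ge>T'. f x < v" "\<And>T'. \<exists>y\<ge>T'. v < f y"
  obtains b where "T < b" "f b < v" "deriv f b = 0" "0 \<le> deriv (deriv f) b"
proof -
  obtain q1 where q1: "T \<le> q1" "v < f q1"
    using assms(3) by blast
  obtain p where p: "q1 + 1 \<le> p" "f p < v"
    using assms(2) by blast
  obtain q2 where q2: "p + 1 \<le> q2" "v < f q2"
    using assms(3) by blast
  obtain b where "q1 < b" "b < q2" "f b \<le> f p" "deriv f b = 0" "0 \<le> deriv (deriv f) b"
    by (rule interior_min_critical[of q1 p q2 f "deriv f" "deriv (deriv f)"])
       (use q1 p q2 assms(1) in \<open>auto intro!: has_deriv has_deriv2\<close>)
  then show thesis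
    using q1 p by (intro that[of b]) auto
qed

theorem profile_cauchy:
  assumes "0 < \<delta>"
  shows "\<exists>T. \<forall>x y. T \<le> x \<longrightarrow> T \<le> y \<longrightarrow> \<bar>f x - f y\<bar> < \<delta>"
proof (rule ccontr)
  assume "\<not> ?thesis"
  then have oscillates: "\<exists>x\<ge>T. \<exists>y\<ge>T. \<delta> \<le> \<bar>f x - f y\<bar>" for T
    by (auto simp: not_less)
  obtain R e where R: "0 < R" "0 < e" and small:
    "TM ^ 4 * exp (1 - R) + (R + 1) * exp (R + 1) * (4 * TM ^ 3 * e + TM ^ 4 * exp (1 - 2 * R) / 2) < c * \<delta> / 4"
    by (rule flux_error_small[of "TM ^ 4" "4 * TM ^ 3" "c * \<delta> / 4"]) (use TM_nonneg c_pos assms in auto)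
  define \<eta> where "\<eta> = min e (\<delta> / 8)"
  have \<eta>: "0 < \<eta>" "\<eta> \<le> e" "8 * \<eta> \<le> \<delta>"
    using R assms by (auto simp: \<eta>_def)
  obtain T S I where T: "0 \<le> T" "0 \<le> I" "S \<le> TM" "\<delta> \<le> S - I"
    and between: "\<And>y. T \<le> y \<Longrightarrow> I \<le> f y \<and> f y \<le> S"
    and high: "\<And>T'. \<exists>x\<ge>T'. S - \<eta> < f x" and low: "\<And>T'. \<exists>y\<ge>T'. f y < I + \<eta>"
    by (rule tail_sup_inf_gap[of f TM \<delta> \<eta>]) (use bounds oscillates \<eta>(1) in auto)
  have "I + \<eta> < S - \<eta>"
    using T(4) \<eta> by linarith
  then have "\<exists>y\<ge>T'. f y < S - \<eta>" "\<exists>x\<ge>T'. I + \<eta> < f x" for T'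
    using high[of T'] low[of T'] by force+
  then obtain a b where a: "T + 2 * R < a" "S - \<eta> < f a" "deriv f a = 0" "deriv (deriv f) a \<le> 0"
    and b: "T + 2 * R < b" "f b < I + \<eta>" "deriv f b = 0" "0 \<le> deriv (deriv f) b"
    using late_critical_max_above[of "T + 2 * R" "S - \<eta>"] late_critical_min_below[of "T + 2 * R" "I + \<eta>"]
      high low T(1) R(1) by (metis add_nonneg_pos mult_pos_pos zero_less_numeral)
  have "\<bar>flux a\<bar> < c * \<delta> / 4"
    using abs_flux_le_near_max[of T R a S e] T a between \<eta> R small by fastforce
  moreover have "\<bar>flux b\<bar> < c * \<delta> / 4"
    using abs_flux_le_near_min[of T R b I e] T b between \<eta> R small by fastforce
  moreover have "c * (f a - f b) = flux a - flux b"
    using a b T(1) R(1) by (intro flux_balance) auto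
  moreover have "\<delta> / 2 \<le> f a - f b"
    using a b T(4) \<eta> by linarith
  then have "c * \<delta> / 2 \<le> c * (f a - f b)"
    using c_pos by (simp add: mult_left_mono)
  ultimately show False
    by linarith
qed

lemma shifted_equation:
  assumes "- a < y"
  shows "((\<lambda>y. f (a + y)) has_real_derivative deriv (\<lambda>y. f (a + y)) y) (at y) \<and>
    (deriv (\<lambda>y. f (a + y)) has_real_derivative deriv (deriv (\<lambda>y. f (a + y))) y) (at y) \<and>
    - deriv (deriv (\<lambda>y. f (a + y))) y + c * deriv (\<lambda>y. f (a + y)) y + f (a + y) ^ 4
      - (LINT \<eta>:{-a..}|lborel. E (\<eta> - y) * f (a + \<eta>) ^ 4) = 0"
proof -
  have y: "0 < a + y"
    using assms by simp
  have shifted_deriv: "deriv (\<lambda>y. f (a + y)) = (\<lambda>y. deriv f (a + y))"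
    by (rule ext) (rule deriv_shift_left)
  show ?thesis
    unfolding shifted_deriv deriv_shift_left
    using DERIV_shift_left[OF has_deriv[OF y]] DERIV_shift_left[OF has_deriv2[OF y]] equation[OF y]
      set_integral_E_shift_atLeast[of a y "\<lambda>x. f x ^ 4"]
    by simp
qed

lemma shifted_tail_osc:
  "\<exists>L0>0. \<forall>a>L0. \<forall>L. L0 < L \<and> L < a \<and> osc {-L..L} (\<lambda>y. f (a + y)) < \<epsilon>
     \<longrightarrow> osc {L..} (\<lambda>y. f (a + y)) < 3 * \<epsilon>"
proof (cases "0 < \<epsilon>")
  case True
  then obtain T where T: "\<And>x y. T \<le> x \<Longrightarrow> T \<le> y \<Longrightarrow> \<bar>f x - f y\<bar> < \<epsilon>"
    using profile_cauchy by blast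
  show ?thesis
  proof (intro exI[of _ "max 1 T"] conjI allI impI)
    fix a L assume L: "max 1 T < L \<and> L < a \<and> osc {-L..L} (\<lambda>y. f (a + y)) < \<epsilon>"
    have "osc {L..} (\<lambda>y. f (a + y)) \<le> \<epsilon>"
    proof (rule osc_le)
      fix y1 y2 assume "y1 \<in> {L..}" "y2 \<in> {L..}"
      then have "T \<le> a + y1" "T \<le> a + y2"
        using L by auto
      then show "\<bar>f (a + y1) - f (a + y2)\<bar> \<le> \<epsilon>"
        using T less_imp_le by blast
    qed simp
    then show "osc {L..} (\<lambda>y. f (a + y)) < 3 * \<epsilon>"
      using True by linarith
  qed simp
next
  case False
  show ?thesis
  proof (intro exI[of _ 1] conjI allI impI)
    fix a L assume L: "1 < L \<and> L < a \<and> osc {-L..L} (\<lambda>y. f (a + y)) < \<epsilon>"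
    have "0 \<le> osc {-L..L} (\<lambda>y. f (a + y))"
      using L bounds by (intro osc_nonneg[of 0 _ _ TM]) auto
    with L False show "osc {L..} (\<lambda>y. f (a + y)) < 3 * \<epsilon>"
      by linarith
  qed simp
qed

end

theorem corollary3p7:
  fixes TM c lam :: real
  defines "f \<equiv> flim TM c"
  assumes TM_pos: "TM > 0" and c_pos: "c > 0" and lam_pos: "lam > 0"
    and f_eq: "\<forall>y>0. (f has_real_derivative deriv f y) (at y) \<and>
                 (deriv f has_real_derivative deriv (deriv f) y) (at y) \<and>
                 deriv (deriv f) y - c * deriv f y - f y ^ 4
                   = - (LINT \<eta>:{0..}|lborel. E (y - \<eta>) * f \<eta> ^ 4)"
    and f_init: "f 0 = TM"
    and f_bounds: "\<forall>y\<ge>0. lam \<le> f y \<and> f y \<le> TM"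
  shows "\<exists>\<epsilon>0>0. \<forall>\<epsilon><\<epsilon>0. \<exists>L0>0. \<forall>a>L0.
           (let ft = (\<lambda>y. f (a + y)) in
             (\<forall>y>-a. (ft has_real_derivative deriv ft y) (at y) \<and>
                 (deriv ft has_real_derivative deriv (deriv ft) y) (at y) \<and>
                 - deriv (deriv ft) y + c * deriv ft y + ft y ^ 4
                   - (LINT \<eta>:{-a..}|lborel. E (\<eta> - y) * ft \<eta> ^ 4) = 0) \<and>
             ft (-a) = TM \<and>
             (\<forall>y\<ge>-a. 0 < lam \<and> lam \<le> ft y \<and> ft y \<le> TM) \<and>
             (\<forall>L. L0 < L \<and> L < a \<and> osc {-L..L} ft < \<epsilon> \<longrightarrow> osc {L..} ft < 3 * \<epsilon>))"
proof -
  interpret nonlocal_profile f c TM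
  proof unfold_locales
    show "0 \<le> f y \<and> f y \<le> TM" if "0 \<le> y" for y
      using f_bounds lam_pos that by force
  qed (use c_pos f_eq in auto)
  show ?thesis (is "\<exists>\<epsilon>0>0. \<forall>\<epsilon><\<epsilon>0. ?P \<epsilon>")
  proof -
    have "?P \<epsilon>" for \<epsilon>
    proof -
      obtain L0 where L0: "0 < L0" and tail: "\<forall>a>L0. \<forall>L. L0 < L \<and> L < a \<and> osc {-L..L} (\<lambda>y. f (a + y)) < \<epsilon>
          \<longrightarrow> osc {L..} (\<lambda>y. f (a + y)) < 3 * \<epsilon>"
        using shifted_tail_osc[of \<epsilon>] by blast
      show ?thesis
        unfolding Let_def using L0 tail f_init f_bounds lam_pos
        by (intro shifted_equation exI[of _ L0] conjI allI impI) auto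
    qed
    then show ?thesis
      by (intro exI[of _ 1]) simp
  qed
qed

end
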